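(* For every real $p>1$, the $p$-geometric rule satisfies $\kappa$-group representation for $\kappa(\alpha,\lambda)=\lceil\frac{p^{\lambda+1}}{\alpha(p-1)}\rceil$. That is, for every rational $\alpha\in(0,1]$, every $\lambda\in\mathbb N$, every profile $P$, every ranking $r$ that the $p$-geometric rule may output on $P$ (under any tie-breaking), and every group $N'$ that is $(\alpha,\lambda)$-significant in $P$, we have $\mathrm{avg}(N',r_{\le k})\ge\lambda$ where $k=\lceil\frac{p^{\lambda+1}}{\alpha(p-1)}\rceil$.
   Context: Let $N=[n]$ be a finite set of voters and $A$ a finite set of $m$ alternatives; a profile $P=(A_1,\dots,A_n)$ gives each voter $i$ a non-empty approval set $A_i\subseteq A$. A ranking $r=(r_1,\dots,r_m)$ is a linear order of $A$, $r_{\le k}=\{r_1,\dots,r_k\}$, with $r_{\le k}=A$ for $k\ge m$. For nonempty $N'\subseteq N$ and $S\subseteq A$, $\mathrm{avg}(N',S)=\frac1{|N'|}\sum_{i\in N'}|A_i\cap S|$. The cohesiveness of $N'$ is $\lambda(N')=|\bigcap_{i\in N'}A_i|$; $N'$ is $(\alpha,\lambda)$-significant in $P$ if $|N'|=\lceil\alpha n\rceil$ and $\lambda(N')\ge\lambda$. For a weight vector $\mathbf w=(w_1,w_2,\dots)$ of nonnegative reals and $S\subseteq A$, let $w(S)=\sum_{i\in N}\sum_{j=1}^{|A_i\cap S|}w_j$. The rule $\mathbf w$-RAV builds $r$ iteratively from the empty ranking: at step $k\in[m]$ it appends an unranked alternative $a$ maximizing $w(r_{\le k-1}\cup\{a\})-w(r_{\le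 k-1})$ (ties broken arbitrarily). The $p$-geometric rule is $\mathbf w$-RAV with $\mathbf w=(\frac1p,\frac1{p^2},\frac1{p^3},\dots)$. *)

theory Defs
  imports Complex_Main
begin

text \<open>A ranking is a duplicate-free list r enumerating A; r_{\<le>k} = set (take k r).\<close>

definition is_profile :: "'v set \<Rightarrow> 'a set \<Rightarrow> ('v \<Rightarrow> 'a set) \<Rightarrow> bool" where
  "is_profile N A P \<longleftrightarrow> finite N \<and> N \<noteq> {} \<and> finite A \<and> (\<forall>i\<in>N. P i \<noteq> {} \<and> P i \<subseteq> A)"

definition is_ranking :: "'a set \<Rightarrow> 'a list \<Rightarrow> bool" where
  "is_ranking A r \<longleftrightarrow> distinct r \<and> set r = A"

definition prefix_set :: "'a list \<Rightarrow> nat \<Rightarrow> 'a set" where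
  "prefix_set r k = set (take k r)"

definition avg :: "('v \<Rightarrow> 'a set) \<Rightarrow> 'v set \<Rightarrow> 'a set \<Rightarrow> real" where
  "avg P N' S = (\<Sum>i\<in>N'. real (card (P i \<inter> S))) / real (card N')"

definition cohesiveness :: "('v \<Rightarrow> 'a set) \<Rightarrow> 'v set \<Rightarrow> nat" where
  "cohesiveness P N' = card (\<Inter>i\<in>N'. P i)"

definition significant :: "'v set \<Rightarrow> ('v \<Rightarrow> 'a set) \<Rightarrow> real \<Rightarrow> nat \<Rightarrow> 'v set \<Rightarrow> bool" where
  "significant N P \<alpha> lam N' \<longleftrightarrow> N' \<noteq> {} \<and> N' \<subseteq> N \<and>
     int (card N') = \<lceil>\<alpha> * real (card N)\<rceil> \<and> cohesiveness P N' \<ge> lam"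

text \<open>Weight vector w indexed from 1: w 1, w 2, ...\<close>
definition wscore :: "(nat \<Rightarrow> real) \<Rightarrow> 'v set \<Rightarrow> ('v \<Rightarrow> 'a set) \<Rightarrow> 'a set \<Rightarrow> real" where
  "wscore w N P S = (\<Sum>i\<in>N. \<Sum>j=1..card (P i \<inter> S). w j)"

text \<open>r is a possible output of w-RAV (under some tie-breaking): at each step k (0-based index)
  the appended alternative maximizes the marginal gain among unranked alternatives.\<close>
definition wRAV_output :: "(nat \<Rightarrow> real) \<Rightarrow> 'v set \<Rightarrow> 'a set \<Rightarrow> ('v \<Rightarrow> 'a set) \<Rightarrow> 'a list \<Rightarrow> bool" where
  "wRAV_output w N A P r \<longleftrightarrow> is_ranking A r \<and>
     (\<forall>k < length r. \<forall>a \<in> A - prefix_set r k.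
        wscore w N P (prefix_set r k \<union> {a}) - wscore w N P (prefix_set r k)
        \<le> wscore w N P (prefix_set r k \<union> {r ! k}) - wscore w N P (prefix_set r k))"

definition geometric_weights :: "real \<Rightarrow> nat \<Rightarrow> real" where
  "geometric_weights p j = 1 / p ^ j"

end

theory Submission
  imports Defs
begin

text \<open>Suppose the group \<open>N'\<close> has average below \<open>\<lambda>\<close> on the first \<open>k\<close> ranked alternatives.
  Then at each of the first \<open>k\<close> steps some alternative approved by all of \<open>N'\<close> is still unranked,
  and by convexity of \<open>x \<mapsto> p\<^sup>-\<^sup>x\<close> (its tangent at \<open>\<lambda>\<close>) adding it would raise the score by
  more than \<open>|N'|/p\<^sup>\<lambda>\<^sup>+\<^sup>1\<close>; the greedy step gains at least as much. The total score is
  below \<open>|N|/(p-1)\<close>, so \<open>k |N'|/p\<^sup>\<lambda>\<^sup>+\<^sup>1 < |N|/(p-1) \<le> \<kappa> |N'|/p\<^sup>\<lambda>\<^sup>+\<^sup>1\<close>.\<close>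

lemma sum_geometric_weights:
  fixes p :: real
  assumes "p > 1"
  shows "(\<Sum>j=1..m. geometric_weights p j) = (1 - (1/p)^m) / (p - 1)"
proof (induction m)
  case 0
  then show ?case by simp
next
  case (Suc m)
  have "(\<Sum>j=1..Suc m. geometric_weights p j) = (1 - (1/p)^m) / (p - 1) + 1/p^(Suc m)"
    using Suc by (simp add: geometric_weights_def)
  also have "\<dots> = (1 - (1/p)^Suc m) / (p - 1)"
    using assms by (simp add: field_simps power_one_over)
  finally show ?case .
qed

lemma sum_geometric_weights_le:
  fixes p :: real
  assumes "p > 1"
  shows "(\<Sum>j=1..m. geometric_weights p j) \<le> 1 / (p - 1)"
proof -
  have "(1 - (1/p)^m) / (p - 1) \<le> 1 / (p - 1)"
    using assms by (intro divide_right_mono) auto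
  then show ?thesis
    using sum_geometric_weights[OF assms] by simp
qed

lemma wscore_geometric_le:
  fixes p :: real
  assumes "p > 1"
  shows "wscore (geometric_weights p) N P S \<le> real (card N) / (p - 1)"
proof -
  have "wscore (geometric_weights p) N P S \<le> (\<Sum>i\<in>N. 1 / (p - 1))"
    unfolding wscore_def by (intro sum_mono sum_geometric_weights_le assms)
  then show ?thesis by simp
qed

lemma inverse_power_ge_tangent:
  fixes p :: real and s l :: nat
  assumes "p > 1"
  shows "(1 / p ^ (l + 1)) * (1 + (real l - real s) * ln p) \<le> 1 / p ^ (s + 1)"
proof -
  have "exp ((real l - real s) * ln p) = p powr (real l - real s)"
    using assms by (simp add: powr_def)
  then have exp_eq: "exp ((real l - real s) * ln p) = p ^ l / p ^ s"
    using assms by (simp add: powr_diff powr_realpow)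
  have "(1 / p ^ (l + 1)) * (1 + (real l - real s) * ln p)
      \<le> (1 / p ^ (l + 1)) * exp ((real l - real s) * ln p)"
    using assms by (intro mult_left_mono exp_ge_add_one_self) auto
  also have "\<dots> = 1 / p ^ (s + 1)"
    unfolding exp_eq using assms by (simp add: field_simps)
  finally show ?thesis .
qed

lemma sum_inverse_power_gt:
  fixes p :: real and l :: nat and s :: "'v \<Rightarrow> nat"
  assumes "p > 1" "finite M" "M \<noteq> {}"
    and "(\<Sum>i\<in>M. real (s i)) < real l * real (card M)"
  shows "real (card M) / p ^ (l + 1) < (\<Sum>i\<in>M. 1 / p ^ (s i + 1))"
proof -
  let ?D = "real l * real (card M) - (\<Sum>i\<in>M. real (s i))"
  have "0 < ln p * ?D"
    using assms by simp
  then have "(1 / p ^ (l + 1)) * real (card M) < (1 / p ^ (l + 1)) * (real (card M) + ln p * ?D)"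
    using assms(1) by (intro mult_strict_left_mono) auto
  also have "\<dots> = (\<Sum>i\<in>M. (1 / p ^ (l + 1)) * (1 + (real l - real (s i)) * ln p))"
    by (simp add: sum_distrib_left sum.distrib sum_subtractf algebra_simps
        sum_distrib_right[symmetric] add_divide_distrib)
  also have "\<dots> \<le> (\<Sum>i\<in>M. 1 / p ^ (s i + 1))"
    by (intro sum_mono inverse_power_ge_tangent assms)
  finally show ?thesis by simp
qed

lemma wscore_insert_gain_ge:
  assumes "\<And>j. w j \<ge> 0" "finite N" "\<forall>i\<in>N. finite (P i)" "N' \<subseteq> N"
    and "a \<notin> S" "\<forall>i\<in>N'. a \<in> P i"
  shows "(\<Sum>i\<in>N'. w (card (P i \<inter> S) + 1)) \<le> wscore w N P (S \<union> {a}) - wscore w N P S"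
proof -
  define d where
    "d i = (\<Sum>j=1..card (P i \<inter> (S \<union> {a})). w j) - (\<Sum>j=1..card (P i \<inter> S). w j)" for i
  have d_nonneg: "d i \<ge> 0" if "i \<in> N" for i
  proof -
    have "card (P i \<inter> S) \<le> card (P i \<inter> (S \<union> {a}))"
      using assms(3) that by (intro card_mono) auto
    then show ?thesis
      unfolding d_def using assms(1) by (simp add: sum_mono2)
  qed
  have d_N': "d i = w (card (P i \<inter> S) + 1)" if "i \<in> N'" for i
  proof -
    have "P i \<inter> (S \<union> {a}) = insert a (P i \<inter> S)"
      using assms(6) that by auto
    then have "card (P i \<inter> (S \<union> {a})) = Suc (card (P i \<inter> S))"
      using assms(3-5) that by auto
    then show ?thesis unfolding d_def by simp
  qed
  have "(\<Sum>i\<in>N'. w (card (P i \<inter> S) + 1)) = (\<Sum>i\<in>N'. d i)"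
    using d_N' by simp
  also have "\<dots> \<le> (\<Sum>i\<in>N. d i)"
    using assms(2,4) d_nonneg by (intro sum_mono2) auto
  also have "\<dots> = wscore w N P (S \<union> {a}) - wscore w N P S"
    by (simp add: wscore_def d_def sum_subtractf)
  finally show ?thesis .
qed

lemma geometric_gain_gt:
  fixes p :: real
  assumes "p > 1" "finite N" "\<forall>i\<in>N. finite (P i)" "N' \<subseteq> N" "N' \<noteq> {}"
    and "a \<notin> S" "\<forall>i\<in>N'. a \<in> P i"
    and "(\<Sum>i\<in>N'. real (card (P i \<inter> S))) < real l * real (card N')"
  shows "real (card N') / p ^ (l + 1)
    < wscore (geometric_weights p) N P (S \<union> {a}) - wscore (geometric_weights p) N P S"
proof -
  have "finite N'"
    using assms(2,4) finite_subset by blast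
  then have "real (card N') / p ^ (l + 1) < (\<Sum>i\<in>N'. 1 / p ^ (card (P i \<inter> S) + 1))"
    using sum_inverse_power_gt[OF assms(1) _ assms(5) assms(8)] by blast
  also have "\<dots> \<le> wscore (geometric_weights p) N P (S \<union> {a}) - wscore (geometric_weights p) N P S"
    using wscore_insert_gain_ge[of "geometric_weights p"] assms(1-4,6,7)
    by (simp add: geometric_weights_def)
  finally show ?thesis .
qed

lemma sum_card_inter_ge_cohesiveness:
  assumes "\<forall>i\<in>N'. finite (P i)" "(\<Inter>i\<in>N'. P i) \<subseteq> S"
  shows "real (cohesiveness P N') * real (card N') \<le> (\<Sum>i\<in>N'. real (card (P i \<inter> S)))"
proof -
  have "cohesiveness P N' \<le> card (P i \<inter> S)" if "i \<in> N'" for i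
    unfolding cohesiveness_def using assms that by (intro card_mono) auto
  then have "(\<Sum>i\<in>N'. real (cohesiveness P N')) \<le> (\<Sum>i\<in>N'. real (card (P i \<inter> S)))"
    by (intro sum_mono) auto
  then show ?thesis by (simp add: mult.commute)
qed

lemma prefix_set_mono: "t \<le> k \<Longrightarrow> prefix_set r t \<subseteq> prefix_set r k"
  unfolding prefix_set_def by (simp add: set_take_subset_set_take)

lemma wscore_prefix_telescope:
  "wscore w N P (prefix_set r k)
     = (\<Sum>t<k. wscore w N P (prefix_set r (Suc t)) - wscore w N P (prefix_set r t))"
  by (subst sum_lessThan_telescope) (simp add: wscore_def prefix_set_def)

lemma wRAV_step_gain_ge:
  assumes "wRAV_output w N A P r" "t < length r" "a \<in> A - prefix_set r t"
  shows "wscore w N P (prefix_set r t \<union> {a}) - wscore w N P (prefix_set r t)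
    \<le> wscore w N P (prefix_set r (Suc t)) - wscore w N P (prefix_set r t)"
proof -
  have "prefix_set r t \<union> {r ! t} = prefix_set r (Suc t)"
    using assms(2) by (simp add: prefix_set_def take_Suc_conv_app_nth)
  then show ?thesis
    using assms unfolding wRAV_output_def by metis
qed

lemma geometric_RAV_deficient_prefix_bound:
  fixes p :: real
  assumes "p > 1" "is_profile N A P" "wRAV_output (geometric_weights p) N A P r"
    and "N' \<subseteq> N" "N' \<noteq> {}" "l \<le> cohesiveness P N'"
    and "avg P N' (prefix_set r k) < real l"
  shows "real k * real (card N') / p ^ (l + 1) < real (card N) / (p - 1)"
proof -
  let ?W = "\<lambda>S. wscore (geometric_weights p) N P S"
  let ?C = "\<Inter>i\<in>N'. P i"
  have N: "finite N" "N \<noteq> {}" and finP: "\<forall>i\<in>N. finite (P i)" and PA: "\<forall>i\<in>N. P i \<subseteq> A"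
    using assms(2) finite_subset unfolding is_profile_def by blast+
  have "card N' > 0"
    using assms(4,5) N(1) finite_subset card_gt_0_iff by blast
  then have deficient: "(\<Sum>i\<in>N'. real (card (P i \<inter> prefix_set r k))) < real l * real (card N')"
    using assms(7) by (simp add: avg_def divide_less_eq)
  have CA: "?C \<subseteq> A"
    using assms(4,5) PA by blast
  have step: "real (card N') / p ^ (l + 1) < ?W (prefix_set r (Suc t)) - ?W (prefix_set r t)"
    if "t < k" for t
  proof -
    have "(\<Sum>i\<in>N'. real (card (P i \<inter> prefix_set r t)))
        \<le> (\<Sum>i\<in>N'. real (card (P i \<inter> prefix_set r k)))"
      using prefix_set_mono[of t k r] that finP assms(4) by (intro sum_mono) (auto intro!: card_mono)
    then have deficient_t: "(\<Sum>i\<in>N'. real (card (P i \<inter> prefix_set r t))) < real l * real (card N')"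
      using deficient by linarith
    have "\<not> ?C \<subseteq> prefix_set r t"
    proof
      assume "?C \<subseteq> prefix_set r t"
      then have "real (cohesiveness P N') * real (card N')
          \<le> (\<Sum>i\<in>N'. real (card (P i \<inter> prefix_set r t)))"
        using finP assms(4) by (intro sum_card_inter_ge_cohesiveness) auto
      moreover have "real l * real (card N') \<le> real (cohesiveness P N') * real (card N')"
        using assms(6) by (simp add: mult_right_mono)
      ultimately show False
        using deficient_t by linarith
    qed
    then obtain c where c: "c \<in> ?C" "c \<notin> prefix_set r t"
      by blast
    have "t < length r"
    proof (rule ccontr)
      assume "\<not> t < length r"
      then have "prefix_set r t = A"
        using assms(3) by (simp add: wRAV_output_def is_ranking_def prefix_set_def)
      then show False
        using c CA by blast
    qed
    have "real (card N') / p ^ (l + 1) < ?W (prefix_set r t \<union> {c}) - ?W (prefix_set r t)"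
      using c N(1) finP assms(1,4,5) deficient_t by (intro geometric_gain_gt) auto
    also have "\<dots> \<le> ?W (prefix_set r (Suc t)) - ?W (prefix_set r t)"
      using \<open>t < length r\<close> c CA by (intro wRAV_step_gain_ge[OF assms(3)]) auto
    finally show ?thesis .
  qed
  show ?thesis
  proof (cases "k = 0")
    case True
    then show ?thesis
      using N assms(1) by (simp add: card_gt_0_iff)
  next
    case False
    have "real k * real (card N') / p ^ (l + 1) = (\<Sum>t<k. real (card N') / p ^ (l + 1))"
      by simp
    also have "\<dots> < (\<Sum>t<k. ?W (prefix_set r (Suc t)) - ?W (prefix_set r t))"
      using False step by (intro sum_strict_mono) auto
    also have "\<dots> = ?W (prefix_set r k)"
      by (rule wscore_prefix_telescope[symmetric])
    also have "\<dots> \<le> real (card N) / (p - 1)"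
      using assms(1) by (rule wscore_geometric_le)
    finally show ?thesis .
  qed
qed

theorem theorem5:
  fixes p \<alpha> :: real and lam :: nat and N :: "'v set" and A :: "'a set"
    and P :: "'v \<Rightarrow> 'a set" and r :: "'a list" and N' :: "'v set"
  assumes "p > 1"
    and "\<alpha> \<in> \<rat>" and "0 < \<alpha>" and "\<alpha> \<le> 1"
    and "is_profile N A P"
    and "wRAV_output (geometric_weights p) N A P r"
    and "significant N P \<alpha> lam N'"
  shows "avg P N' (prefix_set r (nat \<lceil>p ^ (lam + 1) / (\<alpha> * (p - 1))\<rceil>)) \<ge> real lam"
proof (rule ccontr)
  define K where "K = p ^ (lam + 1) / (\<alpha> * (p - 1))"
  assume "\<not> ?thesis"
  then have deficient: "real (nat \<lceil>K\<rceil>) * real (card N') / p ^ (lam + 1) < real (card N) / (p - 1)"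
    using assms(1,5-7) unfolding K_def significant_def
    by (intro geometric_RAV_deficient_prefix_bound) auto
  have "\<alpha> * real (card N) \<le> real (card N')"
    using assms(7) unfolding significant_def by (metis ceiling_le_iff le_of_int_ceiling of_int_of_nat_eq)
  then have "real (card N) / (p - 1) \<le> real (card N') / (\<alpha> * (p - 1))"
    using assms(1,3) divide_right_mono[of "\<alpha> * real (card N)" _ "\<alpha> * (p - 1)"] by simp
  also have "\<dots> = K * real (card N') / p ^ (lam + 1)"
    using assms(1,3) unfolding K_def by (simp add: field_simps)
  also have "\<dots> \<le> real (nat \<lceil>K\<rceil>) * real (card N') / p ^ (lam + 1)"
    using assms(1) by (intro divide_right_mono mult_right_mono) (linarith, auto)
  finally show False
    using deficient by linarith
qed

end
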